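(* Let $E$ be a Banach lattice such that the lattice operations in $E'$ are weak* sequentially continuous, i.e. $x_n' \to 0$ weak* in $E'$ implies $|x_n'| \to 0$ weak* in $E'$. Let $A \subset E$. Then $|A| = \{|x| : x \in A\}$ is a Grothendieck set if and only if the solid hull $\mathrm{sol}(A)$ is a Grothendieck set.
   Context: A subset $A$ of a Banach space $X$ is a Grothendieck set if $T(A)$ is relatively weakly compact in $c_0$ for every bounded linear operator $T: X \to c_0$. The solid hull is $\mathrm{sol}(A) = \{x \in E : |x| \le |y| \text{ for some } y \in A\}$. *)

theory Defs
  imports "HOL-Analysis.Analysis" "HOL-Library.Lattice_Algebras"
begin

class banach_lattice = banach + ordered_real_vector + lattice_ab_group_add_abs +
  assumes norm_lattice: "\<bar>x\<bar> \<le> \<bar>y\<bar> \<Longrightarrow> norm x \<le> norm y"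

text \<open>Modulus of a functional in the dual E' (Riesz-Kantorovich formula):
  for x \<ge> 0, |f|(x) = sup { f y : |y| \<le> x }; extended linearly via x = x^+ - x^-.\<close>
definition dual_abs_pos :: "('a::banach_lattice \<Rightarrow>\<^sub>L real) \<Rightarrow> 'a \<Rightarrow> real" where
  "dual_abs_pos f x = Sup {blinfun_apply f y | y. \<bar>y\<bar> \<le> x}"

definition dual_abs :: "('a::banach_lattice \<Rightarrow>\<^sub>L real) \<Rightarrow> 'a \<Rightarrow> real" where
  "dual_abs f x = dual_abs_pos f (sup x 0) - dual_abs_pos f (sup (- x) 0)"

definition weak_star_null :: "(nat \<Rightarrow> ('a::real_normed_vector \<Rightarrow>\<^sub>L real)) \<Rightarrow> bool" where
  "weak_star_null F \<longleftrightarrow> (\<forall>x. (\<lambda>n. blinfun_apply (F n) x) \<longlonglongrightarrow> 0)"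

definition dual_lattice_weak_star_seq_cont :: "'a::banach_lattice itself \<Rightarrow> bool" where
  "dual_lattice_weak_star_seq_cont _ \<longleftrightarrow>
     (\<forall>F :: nat \<Rightarrow> ('a \<Rightarrow>\<^sub>L real). weak_star_null F \<longrightarrow>
        (\<forall>x. (\<lambda>n. dual_abs (F n) x) \<longlonglongrightarrow> 0))"

text \<open>c_0 as the closed subspace of l^infinity (bounded functions on nat, sup norm).\<close>
definition c0 :: "(nat \<Rightarrow>\<^sub>C real) set" where
  "c0 = {f. (\<lambda>n. apply_bcontfun f n) \<longlonglongrightarrow> 0}"

definition bounded_linear_functional_on :: "'b::real_normed_vector set \<Rightarrow> ('b \<Rightarrow> real) \<Rightarrow> bool" where
  "bounded_linear_functional_on S \<phi> \<longleftrightarrow>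
     (\<forall>x\<in>S. \<forall>y\<in>S. \<phi> (x + y) = \<phi> x + \<phi> y) \<and>
     (\<forall>c. \<forall>x\<in>S. \<phi> (c *\<^sub>R x) = c * \<phi> x) \<and>
     (\<exists>C. \<forall>x\<in>S. \<bar>\<phi> x\<bar> \<le> C * norm x)"

definition weak_topology_on :: "'b::real_normed_vector set \<Rightarrow> 'b topology" where
  "weak_topology_on S = topology_generated_by
     {S \<inter> \<phi> -` U | \<phi> U. bounded_linear_functional_on S \<phi> \<and> open U}"

definition relatively_weakly_compact_in :: "'b::real_normed_vector set \<Rightarrow> 'b set \<Rightarrow> bool" where
  "relatively_weakly_compact_in S B \<longleftrightarrow>
     B \<subseteq> S \<and> compactin (weak_topology_on S) ((weak_topology_on S) closure_of B)"

definition grothendieck_set :: "'a::real_normed_vector set \<Rightarrow> bool" where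
  "grothendieck_set A \<longleftrightarrow>
     (\<forall>T :: 'a \<Rightarrow> (nat \<Rightarrow>\<^sub>C real). bounded_linear T \<and> range T \<subseteq> c0 \<longrightarrow>
        relatively_weakly_compact_in c0 (T ` A))"

definition sol :: "'a::banach_lattice set \<Rightarrow> 'a set" where
  "sol A = {x. \<exists>y\<in>A. \<bar>x\<bar> \<le> \<bar>y\<bar>}"

end

theory Submission
  imports Defs
begin

text \<open>
  Let T : E \<rightarrow> c0 be bounded with coordinate functionals f_n. If |y| \<le> |x| then
  |f_n y| \<le> |f_n| |x|, and the hypothesis on E' makes x \<mapsto> (|f_n| x)_n a bounded operator
  S : E \<rightarrow> c0. Hence T(sol A) is dominated coordinatewise by the set S(|A|) of nonnegative
  sequences, which is relatively weakly compact when |A| is a Grothendieck set. A subset of c0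
  dominated by a relatively weakly compact set B of nonnegative sequences is itself relatively
  weakly compact: it lies in the image of the compact set (weak closure of B) \<times> [-1,1]^\<nat> under
  (b, t) \<mapsto> (t_n b_n)_n, and this map is weakly continuous because every functional on c0 is
  given by a summable coefficient sequence. The converse holds since |A| \<subseteq> sol A.
\<close>

section \<open>Vector lattices\<close>

lemma sup_zero_diff_sup_uminus_zero:
  fixes x :: "'a::lattice_ab_group_add"
  shows "sup x 0 - sup (- x) 0 = x"
  using prts[of x] pprt_neg[of x] by (simp add: pprt_def)

lemma abs_diff_le_sup:
  fixes a b :: "'a::lattice_ab_group_add_abs"
  assumes "0 \<le> a" "0 \<le> b"
  shows "\<bar>a - b\<bar> \<le> sup a b"
proof -
  have "a - b \<le> sup a b" using assms(2) by (simp add: le_supI1)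
  moreover have "- (a - b) \<le> sup a b" using assms(1) by (simp add: le_supI2)
  ultimately show ?thesis by (simp add: abs_lattice)
qed

lemma riesz_decomposition_nonneg:
  fixes x y w :: "'a::lattice_ab_group_add"
  assumes "0 \<le> x" "0 \<le> y" "0 \<le> w" "w \<le> x + y"
  obtains w1 w2 where "w = w1 + w2" "0 \<le> w1" "w1 \<le> x" "0 \<le> w2" "w2 \<le> y"
proof
  show "w = inf w x + (w - inf w x)" by (metis add.commute diff_add_cancel)
  show "0 \<le> inf w x" "inf w x \<le> x" using assms by simp_all
  show "0 \<le> w - inf w x" by (simp only: diff_ge_0_iff_ge inf_le1)
  have "w - inf w x = sup (w + - w) (w + - x)"
    by (simp only: diff_inf_eq_sup add_sup_distrib_left)
  also have "\<dots> = sup 0 (w - x)" by simp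
  also have "\<dots> \<le> y" using assms by (simp add: diff_le_eq add.commute)
  finally show "w - inf w x \<le> y" .
qed

lemma riesz_decomposition:
  fixes x y z :: "'a::lattice_ab_group_add_abs"
  assumes "0 \<le> x" "0 \<le> y" "\<bar>z\<bar> \<le> x + y"
  obtains u v where "z = u + v" "\<bar>u\<bar> \<le> x" "\<bar>v\<bar> \<le> y"
proof -
  have "sup z 0 \<le> \<bar>z\<bar>" "sup (- z) 0 \<le> \<bar>z\<bar>"
    by (intro sup_least abs_ge_self abs_ge_minus_self abs_ge_zero)+
  then have pos: "sup z 0 \<le> x + y" and neg: "sup (- z) 0 \<le> x + y"
    using assms(3) by (blast intro: order.trans)+
  obtain a1 a2 where a: "sup z 0 = a1 + a2" "0 \<le> a1" "a1 \<le> x" "0 \<le> a2" "a2 \<le> y"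
    using riesz_decomposition_nonneg[OF assms(1,2) sup.cobounded2 pos] by blast
  obtain b1 b2 where b: "sup (- z) 0 = b1 + b2" "0 \<le> b1" "b1 \<le> x" "0 \<le> b2" "b2 \<le> y"
    using riesz_decomposition_nonneg[OF assms(1,2) sup.cobounded2 neg] by blast
  show thesis
  proof
    show "z = (a1 - b1) + (a2 - b2)"
      using sup_zero_diff_sup_uminus_zero[of z] a(1) b(1) by (simp add: algebra_simps)
    show "\<bar>a1 - b1\<bar> \<le> x"
      using abs_diff_le_sup[OF a(2) b(2)] le_supI[OF a(3) b(3)] by (rule order.trans)
    show "\<bar>a2 - b2\<bar> \<le> y"
      using abs_diff_le_sup[OF a(4) b(4)] le_supI[OF a(5) b(5)] by (rule order.trans)
  qed
qed

lemma scaleR_sup_nonneg: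
  fixes a b :: "'a::{ordered_real_vector, lattice}"
  assumes "0 \<le> c"
  shows "c *\<^sub>R sup a b = sup (c *\<^sub>R a) (c *\<^sub>R b)"
proof (cases "c = 0")
  case False
  with assms have c: "0 < c" by simp
  let ?s = "sup (c *\<^sub>R a) (c *\<^sub>R b)"
  have le: "u \<le> inverse c *\<^sub>R ?s" if "c *\<^sub>R u \<le> ?s" for u
    using scaleR_left_mono[OF that, of "inverse c"] c by simp
  have "sup a b \<le> inverse c *\<^sub>R ?s"
    using le[OF sup_ge1] le[OF sup_ge2] by (rule sup_least)
  then have "c *\<^sub>R sup a b \<le> c *\<^sub>R (inverse c *\<^sub>R ?s)"
    using assms by (rule scaleR_left_mono)
  then have "c *\<^sub>R sup a b \<le> ?s" using c by simp
  moreover have "?s \<le> c *\<^sub>R sup a b"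
    by (intro sup_least scaleR_left_mono sup_ge1 sup_ge2 assms)
  ultimately show ?thesis by (rule order.antisym)
qed simp

lemma abs_scaleR_nonneg:
  fixes y :: "'a::{ordered_real_vector, lattice_ab_group_add_abs}"
  assumes "0 \<le> c"
  shows "\<bar>c *\<^sub>R y\<bar> = c *\<^sub>R \<bar>y\<bar>"
  using scaleR_sup_nonneg[OF assms, of y "- y"] by (simp add: abs_lattice)

lemma norm_le_if_abs_le:
  fixes x y :: "'a::banach_lattice"
  assumes "\<bar>y\<bar> \<le> x"
  shows "norm y \<le> norm x"
proof -
  have "0 \<le> x" using assms abs_ge_zero order.trans by blast
  then show ?thesis using norm_lattice[of y x] assms by simp
qed

lemma norm_sup_zero_le:
  fixes x :: "'a::banach_lattice"
  shows "norm (sup x 0) \<le> norm x"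
proof (rule norm_lattice)
  have "sup x 0 \<le> \<bar>x\<bar>" by (intro sup_least abs_ge_self abs_ge_zero)
  then show "\<bar>sup x 0\<bar> \<le> \<bar>x\<bar>" by simp
qed

section \<open>The modulus of a functional\<close>

context
  fixes f :: "'a::banach_lattice \<Rightarrow>\<^sub>L real"
begin

lemma bdd_above_dual_abs_pos_set: "bdd_above {blinfun_apply f y | y. \<bar>y\<bar> \<le> x}"
proof (rule bdd_aboveI)
  fix r assume "r \<in> {blinfun_apply f y | y. \<bar>y\<bar> \<le> x}"
  then obtain y where y: "r = blinfun_apply f y" "\<bar>y\<bar> \<le> x" by blast
  have "r \<le> norm f * norm y" using y(1) norm_blinfun[of f y] by simp
  also have "\<dots> \<le> norm f * norm x" by (simp add: mult_left_mono norm_le_if_abs_le y(2))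
  finally show "r \<le> norm f * norm x" .
qed

lemma dual_abs_pos_upper: "\<bar>y\<bar> \<le> x \<Longrightarrow> blinfun_apply f y \<le> dual_abs_pos f x"
  unfolding dual_abs_pos_def by (rule cSup_upper[OF _ bdd_above_dual_abs_pos_set]) blast

lemma abs_blinfun_apply_le_dual_abs_pos: "\<bar>y\<bar> \<le> x \<Longrightarrow> \<bar>blinfun_apply f y\<bar> \<le> dual_abs_pos f x"
  using dual_abs_pos_upper[of y x] dual_abs_pos_upper[of "- y" x] by (simp add: blinfun.minus_right)

lemma dual_abs_pos_least:
  assumes "0 \<le> x" "\<And>y. \<bar>y\<bar> \<le> x \<Longrightarrow> blinfun_apply f y \<le> M"
  shows "dual_abs_pos f x \<le> M"
proof -
  have "blinfun_apply f 0 \<in> {blinfun_apply f y | y. \<bar>y\<bar> \<le> x}"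
    using assms(1) by (auto intro!: exI[of _ 0])
  then show ?thesis unfolding dual_abs_pos_def using assms(2) by (intro cSup_least) auto
qed

lemma dual_abs_pos_nonneg: "0 \<le> x \<Longrightarrow> 0 \<le> dual_abs_pos f x"
  using dual_abs_pos_upper[of 0 x] by simp

lemma dual_abs_pos_le_norm: "0 \<le> x \<Longrightarrow> dual_abs_pos f x \<le> norm f * norm x"
proof (rule dual_abs_pos_least)
  fix y assume "\<bar>y\<bar> \<le> x"
  then have "norm f * norm y \<le> norm f * norm x" by (simp add: mult_left_mono norm_le_if_abs_le)
  then show "blinfun_apply f y \<le> norm f * norm x" using norm_blinfun[of f y] by simp
qed

lemma dual_abs_pos_zero [simp]: "dual_abs_pos f 0 = 0"
  using dual_abs_pos_le_norm[of 0] dual_abs_pos_nonneg[of 0] by simp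

lemma dual_abs_pos_add:
  assumes x: "0 \<le> x" and y: "0 \<le> y"
  shows "dual_abs_pos f (x + y) = dual_abs_pos f x + dual_abs_pos f y"
proof (rule order.antisym)
  show "dual_abs_pos f (x + y) \<le> dual_abs_pos f x + dual_abs_pos f y"
  proof (rule dual_abs_pos_least)
    show "0 \<le> x + y" using x y by simp
    fix z assume "\<bar>z\<bar> \<le> x + y"
    then obtain u v where uv: "z = u + v" "\<bar>u\<bar> \<le> x" "\<bar>v\<bar> \<le> y"
      using riesz_decomposition[OF x y] by blast
    then show "blinfun_apply f z \<le> dual_abs_pos f x + dual_abs_pos f y"
      by (simp add: blinfun.add_right add_mono dual_abs_pos_upper)
  qed
  have "blinfun_apply f u + blinfun_apply f v \<le> dual_abs_pos f (x + y)"
    if "\<bar>u\<bar> \<le> x" "\<bar>v\<bar> \<le> y" for u v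
  proof -
    have "\<bar>u + v\<bar> \<le> x + y"
      using abs_triangle_ineq[of u v] add_mono[OF that] by (rule order.trans)
    then show ?thesis using dual_abs_pos_upper[of "u + v"] by (simp add: blinfun.add_right)
  qed
  then have "dual_abs_pos f x \<le> dual_abs_pos f (x + y) - blinfun_apply f v" if "\<bar>v\<bar> \<le> y" for v
    using that x by (intro dual_abs_pos_least) (auto simp: algebra_simps)
  then have "dual_abs_pos f y \<le> dual_abs_pos f (x + y) - dual_abs_pos f x"
    using y by (intro dual_abs_pos_least) (auto simp: algebra_simps)
  then show "dual_abs_pos f x + dual_abs_pos f y \<le> dual_abs_pos f (x + y)" by simp
qed

lemma dual_abs_pos_scaleR_le:
  assumes x: "0 \<le> x" and c: "0 < c"
  shows "dual_abs_pos f (c *\<^sub>R x) \<le> c * dual_abs_pos f x"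
proof (rule dual_abs_pos_least)
  show "0 \<le> c *\<^sub>R x" using x c by (simp add: scaleR_nonneg_nonneg)
  fix y assume y: "\<bar>y\<bar> \<le> c *\<^sub>R x"
  have "\<bar>inverse c *\<^sub>R y\<bar> = inverse c *\<^sub>R \<bar>y\<bar>" using c by (simp add: abs_scaleR_nonneg)
  also have "\<dots> \<le> x" using scaleR_left_mono[OF y, of "inverse c"] c by simp
  finally have "inverse c * blinfun_apply f y \<le> dual_abs_pos f x"
    using dual_abs_pos_upper[of "inverse c *\<^sub>R y"] by (simp add: blinfun.scaleR_right)
  then show "blinfun_apply f y \<le> c * dual_abs_pos f x" using c by (simp add: field_simps)
qed

lemma dual_abs_pos_scaleR:
  assumes x: "0 \<le> x" and c: "0 \<le> c"
  shows "dual_abs_pos f (c *\<^sub>R x) = c * dual_abs_pos f x"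
proof (cases "c = 0")
  case False
  with c have c: "0 < c" by simp
  have "dual_abs_pos f x = dual_abs_pos f (inverse c *\<^sub>R (c *\<^sub>R x))" using c by simp
  also have "\<dots> \<le> inverse c * dual_abs_pos f (c *\<^sub>R x)"
    using x c by (intro dual_abs_pos_scaleR_le) (simp_all add: scaleR_nonneg_nonneg)
  finally have "c * dual_abs_pos f x \<le> dual_abs_pos f (c *\<^sub>R x)" using c by (simp add: field_simps)
  then show ?thesis using dual_abs_pos_scaleR_le[OF x c] by simp
qed simp

lemma dual_abs_eq_dual_abs_pos: "0 \<le> x \<Longrightarrow> dual_abs f x = dual_abs_pos f x"
  unfolding dual_abs_def by (simp add: sup_absorb1 sup_absorb2)

lemma dual_abs_add: "dual_abs f (x + y) = dual_abs f x + dual_abs f y"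
proof -
  let ?p = "\<lambda>z::'a. sup z 0" and ?n = "\<lambda>z::'a. sup (- z) 0"
  have rearrange: "a + (d + g) = b + (c + e)"
    if "a - b = x + y" "c - d = x" "e - g = y" for a b c d e g :: 'a
    using that by (simp add: diff_eq_eq algebra_simps)
  have "?p (x + y) + (?n x + ?n y) = ?n (x + y) + (?p x + ?p y)"
    by (rule rearrange) (rule sup_zero_diff_sup_uminus_zero)+
  then have "dual_abs_pos f (?p (x + y)) + (dual_abs_pos f (?n x) + dual_abs_pos f (?n y))
      = dual_abs_pos f (?n (x + y)) + (dual_abs_pos f (?p x) + dual_abs_pos f (?p y))"
    by (metis dual_abs_pos_add add_nonneg_nonneg sup.cobounded2)
  then show ?thesis unfolding dual_abs_def by simp
qed

lemma dual_abs_scaleR: "dual_abs f (c *\<^sub>R x) = c * dual_abs f x"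
proof -
  have "dual_abs_pos f (sup (c *\<^sub>R x) 0) = c * dual_abs_pos f (sup x 0)" if "0 \<le> c" for c x
    using scaleR_sup_nonneg[OF that, of x 0] dual_abs_pos_scaleR[of "sup x 0" c] that by simp
  from this[of c x] this[of c "- x"] this[of "- c" "- x"] this[of "- c" x] show ?thesis
    unfolding dual_abs_def by (cases "0 \<le> c") (simp_all add: right_diff_distrib)
qed

lemma abs_dual_abs_le: "\<bar>dual_abs f x\<bar> \<le> 2 * norm f * norm x"
proof -
  have "norm f * norm (sup x 0) \<le> norm f * norm x" "norm f * norm (sup (- x) 0) \<le> norm f * norm x"
    using norm_sup_zero_le[of x] norm_sup_zero_le[of "- x"] by (simp_all add: mult_left_mono)
  then show ?thesis
    unfolding dual_abs_def
    using dual_abs_pos_le_norm[of "sup x 0"] dual_abs_pos_le_norm[of "sup (- x) 0"]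
      dual_abs_pos_nonneg[of "sup x 0"] dual_abs_pos_nonneg[of "sup (- x) 0"] by simp
qed

end

section \<open>The space c0 and its dual\<close>

lemma apply_Bcontfun_nat:
  fixes f :: "nat \<Rightarrow> 'b::real_normed_vector"
  assumes "\<And>n. norm (f n) \<le> b"
  shows "apply_bcontfun (Bcontfun f) = f"
proof -
  have "continuous_on UNIV f" by simp
  then have "f \<in> bcontfun" using assms by (rule bcontfun_normI)
  then show ?thesis by (simp add: Bcontfun_inverse)
qed

lemma c0_scaleR: "x \<in> c0 \<Longrightarrow> c *\<^sub>R x \<in> c0"
  unfolding c0_def by (auto intro: tendsto_mult_right_zero)

lemma c0_diff: "x \<in> c0 \<Longrightarrow> y \<in> c0 \<Longrightarrow> x - y \<in> c0"
  unfolding c0_def by (auto intro: tendsto_diff[where a=0 and b=0, simplified])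

lemma c0_if_eventually_zero:
  assumes "\<And>n. n \<ge> N \<Longrightarrow> apply_bcontfun x n = 0"
  shows "x \<in> c0"
  unfolding c0_def by (simp add: LIMSEQ_offset[where k=N] assms)

lemma abs_apply_bcontfun_le: "\<bar>apply_bcontfun x n\<bar> \<le> norm x"
  using norm_bounded[of x n] by simp

lemma bounded_linear_apply_bcontfun: "bounded_linear (\<lambda>f. apply_bcontfun f x)"
  by (rule bounded_linear_intro[where K=1]) (simp_all add: norm_bounded)

lemma c0_if_dominated:
  assumes "b \<in> c0" "\<And>n. \<bar>apply_bcontfun c n\<bar> \<le> \<bar>apply_bcontfun b n\<bar>"
  shows "c \<in> c0"
proof -
  have "(\<lambda>n. \<bar>apply_bcontfun b n\<bar>) \<longlonglongrightarrow> 0"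
    using assms(1) unfolding c0_def by (intro tendsto_rabs_zero) simp
  moreover have "\<forall>n. norm (apply_bcontfun c n) \<le> \<bar>apply_bcontfun b n\<bar>" using assms(2) by simp
  ultimately have "(\<lambda>n. apply_bcontfun c n) \<longlonglongrightarrow> 0"
    by (rule Lim_null_comparison[OF always_eventually, rotated])
  then show ?thesis unfolding c0_def by simp
qed

definition c0_nonneg :: "(nat \<Rightarrow>\<^sub>C real) set" where
  "c0_nonneg = {w \<in> c0. \<forall>n. 0 \<le> apply_bcontfun w n}"

definition trunc_seq :: "nat \<Rightarrow> (nat \<Rightarrow> real) \<Rightarrow> (nat \<Rightarrow>\<^sub>C real)" where
  "trunc_seq N g = Bcontfun (\<lambda>m. if m < N then g m else 0)"

definition unit_seq :: "nat \<Rightarrow> (nat \<Rightarrow>\<^sub>C real)" where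
  "unit_seq n = Bcontfun (\<lambda>m. if m = n then 1 else 0)"

lemma apply_trunc_seq: "apply_bcontfun (trunc_seq N g) = (\<lambda>m. if m < N then g m else 0)"
  unfolding trunc_seq_def
  by (rule apply_Bcontfun_nat[where b="\<Sum>k<N. \<bar>g k\<bar>"])
     (auto intro: member_le_sum[where f="\<lambda>k. \<bar>g k\<bar>", simplified])

lemma apply_unit_seq: "apply_bcontfun (unit_seq n) = (\<lambda>m. if m = n then 1 else 0)"
  unfolding unit_seq_def by (rule apply_Bcontfun_nat[where b=1]) auto

lemma trunc_seq_in_c0: "trunc_seq N g \<in> c0"
  by (rule c0_if_eventually_zero[where N=N]) (simp add: apply_trunc_seq)

lemma unit_seq_in_c0: "unit_seq n \<in> c0"
  by (rule c0_if_eventually_zero[where N="Suc n"]) (simp add: apply_unit_seq)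

lemma trunc_seq_0: "trunc_seq 0 g = 0"
  by (rule bcontfun_eqI) (simp add: apply_trunc_seq)

lemma trunc_seq_Suc: "trunc_seq (Suc N) g = trunc_seq N g + g N *\<^sub>R unit_seq N"
  by (rule bcontfun_eqI) (auto simp: apply_trunc_seq apply_unit_seq less_Suc_eq)

lemma trunc_seq_tendsto:
  assumes "x \<in> c0"
  shows "(\<lambda>N. trunc_seq N (apply_bcontfun x)) \<longlonglongrightarrow> x"
proof (rule LIMSEQ_I)
  fix r :: real assume r: "r > 0"
  have "(\<lambda>n. apply_bcontfun x n) \<longlonglongrightarrow> 0" using assms unfolding c0_def by simp
  then obtain N0 where N0: "\<forall>n\<ge>N0. norm (apply_bcontfun x n - 0) < r / 2"
    using LIMSEQ_D half_gt_zero[OF r] by blast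
  show "\<exists>no. \<forall>N\<ge>no. norm (trunc_seq N (apply_bcontfun x) - x) < r"
  proof (intro exI allI impI)
    fix N assume "N0 \<le> N"
    then have "norm (trunc_seq N (apply_bcontfun x) - x) \<le> r / 2"
      using N0 r by (intro norm_bound) (auto simp: apply_trunc_seq less_imp_le)
    then show "norm (trunc_seq N (apply_bcontfun x) - x) < r" using r by simp
  qed
qed

locale c0_functional =
  fixes \<phi> :: "(nat \<Rightarrow>\<^sub>C real) \<Rightarrow> real"
  assumes bounded_linear_functional: "bounded_linear_functional_on c0 \<phi>"
begin

lemma add: "x \<in> c0 \<Longrightarrow> y \<in> c0 \<Longrightarrow> \<phi> (x + y) = \<phi> x + \<phi> y"
  using bounded_linear_functional unfolding bounded_linear_functional_on_def by blast

lemma scaleR: "x \<in> c0 \<Longrightarrow> \<phi> (c *\<^sub>R x) = c * \<phi> x"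
  using bounded_linear_functional unfolding bounded_linear_functional_on_def by blast

lemma zero: "\<phi> 0 = 0"
  using scaleR[of 0 0] unfolding c0_def by simp

lemma diff: "x \<in> c0 \<Longrightarrow> y \<in> c0 \<Longrightarrow> \<phi> (x - y) = \<phi> x - \<phi> y"
  using add[of x "(-1) *\<^sub>R y"] scaleR[of y "-1"] c0_scaleR[of y "-1"] by simp

lemma bounded:
  obtains C where "C \<ge> 0" "\<And>x. x \<in> c0 \<Longrightarrow> \<bar>\<phi> x\<bar> \<le> C * norm x"
proof -
  obtain C where C: "\<forall>x\<in>c0. \<bar>\<phi> x\<bar> \<le> C * norm x"
    using bounded_linear_functional unfolding bounded_linear_functional_on_def by blast
  have "\<bar>\<phi> x\<bar> \<le> max C 0 * norm x" if "x \<in> c0" for x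
    using order.trans[OF C[rule_format, OF that] mult_right_mono[OF max.cobounded1 norm_ge_zero]] .
  then show ?thesis using that[of "max C 0"] by simp
qed

definition coeff :: "nat \<Rightarrow> real" where
  "coeff n = \<phi> (unit_seq n)"

lemma trunc_seq_eq_sum: "\<phi> (trunc_seq N g) = (\<Sum>n<N. g n * coeff n)"
proof (induction N)
  case (Suc N)
  have "\<phi> (trunc_seq (Suc N) g) = \<phi> (trunc_seq N g) + g N * coeff N"
    unfolding trunc_seq_Suc coeff_def
    using add[OF trunc_seq_in_c0 c0_scaleR[OF unit_seq_in_c0]] scaleR[OF unit_seq_in_c0] by simp
  then show ?case using Suc by simp
qed (simp add: trunc_seq_0 zero)

lemma summable_abs_coeff: "summable (\<lambda>n. \<bar>coeff n\<bar>)"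
proof -
  obtain C where C: "C \<ge> 0" "\<And>x. x \<in> c0 \<Longrightarrow> \<bar>\<phi> x\<bar> \<le> C * norm x" using bounded by blast
  show ?thesis
  proof (rule summableI_nonneg_bounded[where x=C])
    fix N
    let ?s = "trunc_seq N (\<lambda>n. sgn (coeff n))"
    have "(\<Sum>n<N. \<bar>coeff n\<bar>) = \<phi> ?s"
      unfolding trunc_seq_eq_sum by (rule sum.cong) (auto simp: sgn_real_def)
    also have "\<dots> \<le> C * norm ?s" using C(2)[OF trunc_seq_in_c0[of N]] by (simp add: abs_le_iff)
    also have "\<dots> \<le> C * 1"
      by (rule mult_left_mono[OF _ C(1)], rule norm_bound) (simp add: apply_trunc_seq sgn_real_def)
    finally show "(\<Sum>n<N. \<bar>coeff n\<bar>) \<le> C" by simp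
  qed simp
qed

lemma sums_coeff:
  assumes x: "x \<in> c0"
  shows "(\<lambda>n. coeff n * apply_bcontfun x n) sums \<phi> x"
proof -
  obtain C where C: "C \<ge> 0" "\<And>x. x \<in> c0 \<Longrightarrow> \<bar>\<phi> x\<bar> \<le> C * norm x" using bounded by blast
  let ?t = "\<lambda>N. trunc_seq N (apply_bcontfun x)"
  have "\<forall>N. norm (\<phi> (?t N) - \<phi> x) \<le> C * norm (?t N - x)"
    using C(2)[OF c0_diff[OF trunc_seq_in_c0 x]] diff[OF trunc_seq_in_c0 x] by simp
  moreover have "(\<lambda>N. C * norm (?t N - x)) \<longlonglongrightarrow> 0"
    using tendsto_norm_zero[OF LIM_zero[OF trunc_seq_tendsto[OF x]]] by (rule tendsto_mult_right_zero)
  ultimately have "(\<lambda>N. \<phi> (?t N) - \<phi> x) \<longlonglongrightarrow> 0"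
    by (rule Lim_null_comparison[OF always_eventually])
  then have "(\<lambda>N. \<phi> (?t N)) \<longlonglongrightarrow> \<phi> x" by (rule LIM_zero_cancel)
  then show ?thesis unfolding sums_def trunc_seq_eq_sum by (simp add: mult.commute)
qed


definition tail :: "nat \<Rightarrow> (nat \<Rightarrow>\<^sub>C real) \<Rightarrow> real" where
  "tail N w = (\<Sum>m. \<bar>coeff (m + N)\<bar> * apply_bcontfun w (m + N))"

lemma summable_tail: "summable (\<lambda>m. \<bar>coeff (m + N)\<bar> * apply_bcontfun w (m + N))"
proof -
  have "summable (\<lambda>m. \<bar>coeff m\<bar> * norm w)" by (rule summable_mult2[OF summable_abs_coeff])
  then have "summable (\<lambda>m. \<bar>coeff m\<bar> * apply_bcontfun w m)"
    by (rule summable_comparison_test'[where N=0])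
       (simp add: abs_mult mult_left_mono abs_apply_bcontfun_le)
  then show ?thesis by (rule summable_ignore_initial_segment)
qed

lemma tail_functional: "bounded_linear_functional_on c0 (tail N)"
  unfolding bounded_linear_functional_on_def
proof (intro conjI ballI allI)
  fix x y :: "nat \<Rightarrow>\<^sub>C real"
  show "tail N (x + y) = tail N x + tail N y"
    unfolding tail_def using suminf_add[OF summable_tail[of N x] summable_tail[of N y]]
    by (simp add: distrib_left)
next
  fix c and x :: "nat \<Rightarrow>\<^sub>C real"
  show "tail N (c *\<^sub>R x) = c * tail N x"
    unfolding tail_def using suminf_mult[OF summable_tail[of N x], of c]
    by (simp add: algebra_simps)
next
  have sa: "summable (\<lambda>m. \<bar>coeff (m + N)\<bar>)"
    by (rule summable_ignore_initial_segment[OF summable_abs_coeff])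
  show "\<exists>C. \<forall>x\<in>c0. \<bar>tail N x\<bar> \<le> C * norm x"
  proof (intro exI ballI)
    fix x :: "nat \<Rightarrow>\<^sub>C real"
    have "\<bar>tail N x\<bar> \<le> (\<Sum>m. \<bar>coeff (m + N)\<bar> * norm x)"
      unfolding tail_def real_norm_def[symmetric]
      by (rule norm_suminf_le)
         (auto simp: abs_mult intro: mult_left_mono abs_apply_bcontfun_le summable_mult2[OF sa])
    then show "\<bar>tail N x\<bar> \<le> (\<Sum>m. \<bar>coeff (m + N)\<bar>) * norm x"
      by (simp add: suminf_mult2[OF sa])
  qed
qed

lemma tail_nonneg: "w \<in> c0_nonneg \<Longrightarrow> 0 \<le> tail N w"
  unfolding tail_def c0_nonneg_def by (intro suminf_nonneg[OF summable_tail]) auto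

end

section \<open>Weak topologies\<close>

lemma topspace_weak_topology_on: "topspace (weak_topology_on S) = S"
proof -
  have "bounded_linear_functional_on S (\<lambda>_. 0)"
    unfolding bounded_linear_functional_on_def by (auto intro!: exI[of _ 0])
  then have "S \<in> {S \<inter> \<phi> -` U | \<phi> U. bounded_linear_functional_on S \<phi> \<and> open U}"
    by (auto intro!: exI[of _ "\<lambda>_. 0"] exI[of _ UNIV])
  then show ?thesis unfolding weak_topology_on_def topology_generated_by_topspace by blast
qed

lemma continuous_map_weak_topology_on_functional:
  assumes "bounded_linear_functional_on S \<phi>"
  shows "continuous_map (weak_topology_on S) euclideanreal \<phi>"
  unfolding continuous_map_def
proof (intro conjI allI impI)
  fix U :: "real set" assume "openin euclideanreal U"
  then have "openin (weak_topology_on S) (S \<inter> \<phi> -` U)"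
    unfolding weak_topology_on_def using assms by (intro topology_generated_by_Basis) auto
  moreover have "{x \<in> topspace (weak_topology_on S). \<phi> x \<in> U} = S \<inter> \<phi> -` U"
    by (auto simp: topspace_weak_topology_on)
  ultimately show "openin (weak_topology_on S) {x \<in> topspace (weak_topology_on S). \<phi> x \<in> U}"
    by simp
qed simp

lemma continuous_map_into_weak_topology_on:
  assumes "f \<in> topspace X \<rightarrow> S"
    and "\<And>\<phi>. bounded_linear_functional_on S \<phi> \<Longrightarrow> continuous_map X euclideanreal (\<phi> \<circ> f)"
  shows "continuous_map X (weak_topology_on S) f"
  unfolding weak_topology_on_def
proof (rule continuous_on_generated_topo)
  fix U assume "U \<in> {S \<inter> \<phi> -` U | \<phi> U. bounded_linear_functional_on S \<phi> \<and> open U}"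
  then obtain \<phi> V where U: "U = S \<inter> \<phi> -` V" and \<phi>: "bounded_linear_functional_on S \<phi>"
    and "open V"
    by blast
  then have "openin X {x \<in> topspace X. (\<phi> \<circ> f) x \<in> V}"
    using openin_continuous_map_preimage[OF assms(2)[OF \<phi>], of V] by simp
  moreover have "f -` U \<inter> topspace X = {x \<in> topspace X. (\<phi> \<circ> f) x \<in> V}"
    using U assms(1) by auto
  ultimately show "openin X (f -` U \<inter> topspace X)" by simp
next
  show "f ` topspace X \<subseteq> \<Union> {S \<inter> \<phi> -` U | \<phi> U. bounded_linear_functional_on S \<phi> \<and> open U}"
    using assms(1) topspace_weak_topology_on[of S]
    unfolding weak_topology_on_def topology_generated_by_topspace by blast
qed

lemma relatively_weakly_compact_in_subset:
  assumes "relatively_weakly_compact_in S C" "B \<subseteq> C"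
  shows "relatively_weakly_compact_in S B"
  using assms closed_compactin[OF _ closure_of_mono closedin_closure_of]
  unfolding relatively_weakly_compact_in_def by blast

lemma bounded_linear_functional_on_c0_apply:
  "bounded_linear_functional_on c0 (\<lambda>w. apply_bcontfun w n)"
  unfolding bounded_linear_functional_on_def
  using abs_apply_bcontfun_le[of _ n] by (auto intro!: exI[of _ 1])

lemma continuous_map_weak_topology_on_c0_apply:
  "continuous_map (weak_topology_on c0) euclideanreal (\<lambda>w. apply_bcontfun w n)"
  by (rule continuous_map_weak_topology_on_functional[OF bounded_linear_functional_on_c0_apply])

lemma Hausdorff_space_weak_topology_on_c0: "Hausdorff_space (weak_topology_on c0)"
  unfolding Hausdorff_space_def
proof (intro allI impI)
  fix x y assume xy: "x \<in> topspace (weak_topology_on c0) \<and> y \<in> topspace (weak_topology_on c0) \<and> x \<noteq> y"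
  then obtain n where n: "apply_bcontfun x n \<noteq> apply_bcontfun y n"
    using bcontfun_eqI by blast
  define r where "r = \<bar>apply_bcontfun x n - apply_bcontfun y n\<bar> / 2"
  let ?U = "\<lambda>a. {z \<in> topspace (weak_topology_on c0). apply_bcontfun z n \<in> ball a r}"
  have "openin (weak_topology_on c0) (?U a)" for a
    by (rule openin_continuous_map_preimage[OF continuous_map_weak_topology_on_c0_apply]) simp
  moreover have "x \<in> ?U (apply_bcontfun x n)" "y \<in> ?U (apply_bcontfun y n)"
    using xy n by (auto simp: r_def)
  moreover have "disjnt (?U (apply_bcontfun x n)) (?U (apply_bcontfun y n))"
    unfolding disjnt_def r_def by (auto simp: dist_real_def) (smt (verit))
  ultimately show "\<exists>U V. openin (weak_topology_on c0) U \<and> openin (weak_topology_on c0) V \<and>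
      x \<in> U \<and> y \<in> V \<and> disjnt U V"
    by blast
qed

lemma closedin_c0_nonneg: "closedin (weak_topology_on c0) c0_nonneg"
proof -
  have "closedin (weak_topology_on c0) {z \<in> topspace (weak_topology_on c0). 0 \<le> apply_bcontfun z n}"
    for n
    using closedin_continuous_map_preimage[OF continuous_map_weak_topology_on_c0_apply, of "{0..}" n]
    by simp
  then have "closedin (weak_topology_on c0) (topspace (weak_topology_on c0) \<inter>
      (\<Inter>n. {z \<in> topspace (weak_topology_on c0). 0 \<le> apply_bcontfun z n}))"
    by (intro closedin_Int closedin_topspace closedin_Inter) auto
  moreover have "topspace (weak_topology_on c0) \<inter>
      (\<Inter>n. {z \<in> topspace (weak_topology_on c0). 0 \<le> apply_bcontfun z n}) = c0_nonneg"
    unfolding c0_nonneg_def topspace_weak_topology_on by auto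
  ultimately show ?thesis by simp
qed

section \<open>Domination in c0\<close>

text \<open>Bcontfun of an unbounded sequence is unspecified, so seq_mult (b, t) is only meaningful
  for bounded t; it is used on the domain below, where t takes values in [-1, 1].\<close>
definition seq_mult :: "(nat \<Rightarrow>\<^sub>C real) \<times> (nat \<Rightarrow> real) \<Rightarrow> (nat \<Rightarrow>\<^sub>C real)" where
  "seq_mult z = Bcontfun (\<lambda>n. snd z n * apply_bcontfun (fst z) n)"

abbreviation sign_cube :: "(nat \<Rightarrow> real) topology" where
  "sign_cube \<equiv> product_topology (\<lambda>_. top_of_set {-1..1}) UNIV"

abbreviation seq_mult_domain :: "((nat \<Rightarrow>\<^sub>C real) \<times> (nat \<Rightarrow> real)) topology" where
  "seq_mult_domain \<equiv> prod_topology (subtopology (weak_topology_on c0) c0_nonneg) sign_cube"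

lemma topspace_seq_mult_domain:
  "topspace seq_mult_domain = c0_nonneg \<times> (UNIV \<rightarrow>\<^sub>E {-1..1})"
  using closedin_subset[OF closedin_c0_nonneg] by (auto simp: topspace_prod_topology)

lemma seq_mult_domainD:
  assumes "z \<in> topspace seq_mult_domain"
  shows "fst z \<in> c0" "0 \<le> apply_bcontfun (fst z) n" "\<bar>snd z n\<bar> \<le> 1"
  using assms unfolding topspace_seq_mult_domain c0_nonneg_def
  by (auto simp: PiE_def Pi_def abs_le_iff)

lemma apply_seq_mult:
  assumes "z \<in> topspace seq_mult_domain"
  shows "apply_bcontfun (seq_mult z) = (\<lambda>n. snd z n * apply_bcontfun (fst z) n)"
  unfolding seq_mult_def
proof (rule apply_Bcontfun_nat[where b="norm (fst z)"])
  fix n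
  have "\<bar>snd z n\<bar> * \<bar>apply_bcontfun (fst z) n\<bar> \<le> 1 * norm (fst z)"
    using seq_mult_domainD(3)[OF assms, of n] abs_apply_bcontfun_le[of "fst z" n]
    by (intro mult_mono) auto
  then show "norm (snd z n * apply_bcontfun (fst z) n) \<le> norm (fst z)" by (simp add: abs_mult)
qed

lemma seq_mult_in_c0:
  assumes "z \<in> topspace seq_mult_domain"
  shows "seq_mult z \<in> c0"
proof (rule c0_if_dominated)
  show "fst z \<in> c0" using seq_mult_domainD(1)[OF assms] .
  fix n
  have "\<bar>snd z n\<bar> * \<bar>apply_bcontfun (fst z) n\<bar> \<le> 1 * \<bar>apply_bcontfun (fst z) n\<bar>"
    using seq_mult_domainD(3)[OF assms] by (intro mult_right_mono) auto
  then show "\<bar>apply_bcontfun (seq_mult z) n\<bar> \<le> \<bar>apply_bcontfun (fst z) n\<bar>"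
    by (simp add: apply_seq_mult[OF assms] abs_mult)
qed

lemma continuous_map_seq_mult_domain_fst_apply:
  "continuous_map seq_mult_domain euclideanreal (\<lambda>z. apply_bcontfun (fst z) n)"
  using continuous_map_compose[OF continuous_map_fst
      continuous_map_from_subtopology[OF continuous_map_weak_topology_on_c0_apply]]
  by (simp add: o_def)

lemma continuous_map_seq_mult_domain_snd_apply:
  "continuous_map seq_mult_domain euclideanreal (\<lambda>z. snd z n)"
proof -
  have "continuous_map sign_cube euclideanreal (\<lambda>t. t n)"
    using continuous_map_product_projection[of n UNIV "\<lambda>_. top_of_set {-1..1::real}"]
      continuous_map_in_subtopology by auto
  then show ?thesis using continuous_map_compose[OF continuous_map_snd] by (simp add: o_def)
qed

context c0_functional
begin

lemma seq_mult_tail_estimate: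
  assumes z: "z \<in> topspace seq_mult_domain"
  shows "\<bar>\<phi> (seq_mult z) - (\<Sum>n<N. coeff n * (snd z n * apply_bcontfun (fst z) n))\<bar>
    \<le> tail N (fst z)"
proof -
  let ?f = "\<lambda>n. coeff n * (snd z n * apply_bcontfun (fst z) n)"
  have "?f sums \<phi> (seq_mult z)" using sums_coeff[OF seq_mult_in_c0[OF z]] by (simp add: apply_seq_mult[OF z])
  then have "\<phi> (seq_mult z) - (\<Sum>n<N. ?f n) = (\<Sum>m. ?f (m + N))"
    using suminf_split_initial_segment[of ?f N] by (simp add: sums_iff)
  also have "\<bar>\<dots>\<bar> \<le> tail N (fst z)"
  proof -
    have "norm (?f (m + N)) \<le> \<bar>coeff (m + N)\<bar> * apply_bcontfun (fst z) (m + N)" for m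
    proof -
      have "\<bar>snd z (m + N)\<bar> * apply_bcontfun (fst z) (m + N) \<le> apply_bcontfun (fst z) (m + N)"
        using mult_right_mono[OF seq_mult_domainD(3,2)[OF z]] by simp
      then show ?thesis
        using seq_mult_domainD(2)[OF z, of "m + N"] by (simp add: abs_mult mult_left_mono)
    qed
    then have "norm (\<Sum>m. ?f (m + N)) \<le> tail N (fst z)"
      unfolding tail_def by (rule norm_suminf_le[OF _ summable_tail])
    then show ?thesis by simp
  qed
  finally show ?thesis .
qed

lemma continuous_map_seq_mult_partial_sum:
  "continuous_map seq_mult_domain euclideanreal
     (\<lambda>z. \<Sum>n<N. coeff n * (snd z n * apply_bcontfun (fst z) n))"
  by (intro continuous_map_sum continuous_map_real_mult continuous_map_seq_mult_domain_fst_apply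
      continuous_map_seq_mult_domain_snd_apply) auto

lemma continuous_map_seq_mult_domain_tail:
  "continuous_map seq_mult_domain euclideanreal (\<lambda>z. tail N (fst z))"
  using continuous_map_compose[OF continuous_map_fst continuous_map_from_subtopology
      [OF continuous_map_weak_topology_on_functional[OF tail_functional]]]
  by (simp add: o_def)

text \<open>Near z0 the functional differs from a finite sum of coordinate products by at most
  the tail functional at the first component, which is weakly continuous and small at z0.\<close>
lemma seq_mult_functional_locally_close:
  assumes z0: "z0 \<in> topspace seq_mult_domain" and e: "e > 0"
  obtains U where "openin seq_mult_domain U" "z0 \<in> U"
    "\<And>z. z \<in> U \<Longrightarrow> \<bar>\<phi> (seq_mult z0) - \<phi> (seq_mult z)\<bar> < e"
proof -
  have "\<exists>N. \<forall>n\<ge>N. norm (tail n (fst z0)) < e / 4"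
    using suminf_exist_split[OF _ summable_tail[of 0 "fst z0"], of "e / 4"] e
    by (simp add: tail_def)
  then obtain N where "norm (tail N (fst z0)) < e / 4" by blast
  then have N: "tail N (fst z0) < e / 4" by (simp add: abs_less_iff)
  define g where "g z = (\<Sum>n<N. coeff n * (snd z n * apply_bcontfun (fst z) n))" for z
  define q where "q z = \<bar>g z - g z0\<bar> + \<bar>tail N (fst z) - tail N (fst z0)\<bar>" for z
  have "continuous_map seq_mult_domain euclideanreal q"
    unfolding q_def g_def
    by (intro continuous_map_add continuous_map_real_abs continuous_map_diff
        continuous_map_seq_mult_partial_sum continuous_map_seq_mult_domain_tail) auto
  then have "openin seq_mult_domain {z \<in> topspace seq_mult_domain. q z \<in> {..<e / 4}}"
    by (rule openin_continuous_map_preimage) simp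
  moreover have "z0 \<in> {z \<in> topspace seq_mult_domain. q z \<in> {..<e / 4}}"
    using z0 e by (simp add: q_def)
  moreover have "\<bar>\<phi> (seq_mult z0) - \<phi> (seq_mult z)\<bar> < e"
    if "z \<in> topspace seq_mult_domain" "q z < e / 4" for z
  proof -
    have "\<bar>\<phi> (seq_mult z0) - g z0\<bar> \<le> tail N (fst z0)"
      "\<bar>\<phi> (seq_mult z) - g z\<bar> \<le> tail N (fst z)"
      unfolding g_def by (rule seq_mult_tail_estimate[OF z0] seq_mult_tail_estimate[OF that(1)])+
    moreover have "0 \<le> tail N (fst z)"
      using that(1) by (intro tail_nonneg) (auto simp: topspace_seq_mult_domain)
    ultimately show ?thesis using that(2) N unfolding q_def by linarith
  qed
  ultimately show ?thesis using that by blast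
qed

lemma continuous_map_seq_mult_functional:
  "continuous_map seq_mult_domain euclideanreal (\<phi> \<circ> seq_mult)"
proof -
  have "\<exists>U. openin seq_mult_domain U \<and> z0 \<in> U \<and>
      (\<forall>z\<in>U. \<bar>\<phi> (seq_mult z0) - \<phi> (seq_mult z)\<bar> < e)"
    if "z0 \<in> topspace seq_mult_domain" "e > 0" for z0 e
    using seq_mult_functional_locally_close[OF that] by metis
  then show ?thesis
    using Met_TC.continuous_map_to_metric[of seq_mult_domain "\<phi> \<circ> seq_mult"]
    by (simp add: dist_real_def)
qed

end

lemma continuous_map_seq_mult: "continuous_map seq_mult_domain (weak_topology_on c0) seq_mult"
  using seq_mult_in_c0
  by (intro continuous_map_into_weak_topology_on c0_functional.continuous_map_seq_mult_functional
      c0_functional.intro) auto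

lemma compact_space_sign_cube: "compact_space sign_cube"
  unfolding compact_space_product_topology
  by (simp add: compact_space_subtopology compactin_euclidean_iff)

text \<open>Where b n = 0 also c n = 0, and the quotient is 0 by the convention x / 0 = 0.\<close>
lemma seq_mult_quotient:
  assumes b: "b \<in> c0_nonneg" and dominated: "\<And>n. \<bar>apply_bcontfun c n\<bar> \<le> apply_bcontfun b n"
  defines "t \<equiv> \<lambda>n. apply_bcontfun c n / apply_bcontfun b n"
  shows "(b, t) \<in> topspace seq_mult_domain" "seq_mult (b, t) = c"
proof -
  have "\<bar>t n\<bar> \<le> 1" for n
  proof (cases "apply_bcontfun b n = 0")
    case False
    then have "0 < apply_bcontfun b n"
      using dominated[of n] abs_ge_zero[of "apply_bcontfun c n"] by linarith
    then show ?thesis using dominated[of n] by (simp add: t_def abs_divide)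
  qed (simp add: t_def)
  then show bt: "(b, t) \<in> topspace seq_mult_domain"
    using b unfolding topspace_seq_mult_domain by (simp add: PiE_iff abs_le_iff)
  show "seq_mult (b, t) = c"
  proof (rule bcontfun_eqI)
    fix n
    show "apply_bcontfun (seq_mult (b, t)) n = apply_bcontfun c n"
      unfolding apply_seq_mult[OF bt] using dominated[of n]
      by (cases "apply_bcontfun b n = 0") (simp_all add: t_def)
  qed
qed

lemma relatively_weakly_compact_in_c0_dominated:
  assumes B: "relatively_weakly_compact_in c0 B" "B \<subseteq> c0_nonneg"
    and dominated: "\<And>c. c \<in> C \<Longrightarrow> \<exists>b\<in>B. \<forall>n. \<bar>apply_bcontfun c n\<bar> \<le> apply_bcontfun b n"
  shows "relatively_weakly_compact_in c0 C"
proof -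
  define K where "K = weak_topology_on c0 closure_of B"
  have K_nonneg: "K \<subseteq> c0_nonneg"
    unfolding K_def by (rule closure_of_minimal[OF B(2) closedin_c0_nonneg])
  moreover have "compactin (weak_topology_on c0) K"
    using B(1) unfolding relatively_weakly_compact_in_def K_def by blast
  ultimately have "compactin (subtopology (weak_topology_on c0) c0_nonneg) K"
    by (simp add: compactin_subtopology)
  then have "compactin seq_mult_domain (K \<times> topspace sign_cube)"
    using compact_space_sign_cube compactin_Times unfolding compact_space_def by blast
  then have D: "compactin (weak_topology_on c0) (seq_mult ` (K \<times> topspace sign_cube))"
    by (rule image_compactin[OF _ continuous_map_seq_mult])
  have "C \<subseteq> seq_mult ` (K \<times> topspace sign_cube)"
  proof
    fix c assume "c \<in> C"
    then obtain b where b: "b \<in> B" "\<And>n. \<bar>apply_bcontfun c n\<bar> \<le> apply_bcontfun b n"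
      using dominated by blast
    have "b \<in> K"
      unfolding K_def using b(1) B(2) closure_of_subset[of B "weak_topology_on c0"]
      by (auto simp: topspace_weak_topology_on c0_nonneg_def)
    let ?t = "\<lambda>n. apply_bcontfun c n / apply_bcontfun b n"
    have "(b, ?t) \<in> topspace seq_mult_domain" "seq_mult (b, ?t) = c"
      using seq_mult_quotient[OF _ b(2)] \<open>b \<in> K\<close> K_nonneg by auto
    then show "c \<in> seq_mult ` (K \<times> topspace sign_cube)"
      using \<open>b \<in> K\<close> image_eqI[of c seq_mult "(b, ?t)"] by auto
  qed
  then have "compactin (weak_topology_on c0) (weak_topology_on c0 closure_of C)"
    using D closure_of_minimal[OF _ compactin_imp_closedin[OF Hausdorff_space_weak_topology_on_c0 D]]
    by (blast intro: closed_compactin closedin_closure_of)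
  moreover have "C \<subseteq> c0"
    using dominated B(2) unfolding c0_nonneg_def by (force intro: c0_if_dominated)
  ultimately show ?thesis unfolding relatively_weakly_compact_in_def by blast
qed

section \<open>Grothendieck sets\<close>

lemma grothendieck_set_subset: "grothendieck_set B \<Longrightarrow> A \<subseteq> B \<Longrightarrow> grothendieck_set A"
  unfolding grothendieck_set_def by (meson image_mono relatively_weakly_compact_in_subset)

definition coord_functional :: "('a::real_normed_vector \<Rightarrow> (nat \<Rightarrow>\<^sub>C real)) \<Rightarrow> nat \<Rightarrow> 'a \<Rightarrow>\<^sub>L real" where
  "coord_functional T n = Blinfun (\<lambda>x. apply_bcontfun (T x) n)"

context
  fixes T :: "'a::real_normed_vector \<Rightarrow> (nat \<Rightarrow>\<^sub>C real)"
  assumes T: "bounded_linear T"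
begin

lemma blinfun_apply_coord_functional:
  "blinfun_apply (coord_functional T n) x = apply_bcontfun (T x) n"
  unfolding coord_functional_def
  using bounded_linear_compose[OF bounded_linear_apply_bcontfun T] by (simp add: bounded_linear_Blinfun_apply)

lemma norm_coord_functional_le: "norm (coord_functional T n) \<le> onorm T"
proof (rule norm_blinfun_bound)
  show "0 \<le> onorm T" using onorm_pos_le[OF T] .
  fix x
  show "norm (blinfun_apply (coord_functional T n) x) \<le> onorm T * norm x"
    unfolding blinfun_apply_coord_functional using norm_bounded[of "T x" n] onorm[OF T, of x] by simp
qed

end

definition modulus_operator :: "('a::banach_lattice \<Rightarrow> (nat \<Rightarrow>\<^sub>C real)) \<Rightarrow> 'a \<Rightarrow> (nat \<Rightarrow>\<^sub>C real)" where
  "modulus_operator T x = Bcontfun (\<lambda>n. dual_abs (coord_functional T n) x)"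

context
  fixes T :: "'a::banach_lattice \<Rightarrow> (nat \<Rightarrow>\<^sub>C real)"
  assumes T: "bounded_linear T"
begin

lemma abs_dual_abs_coord_functional_le: "\<bar>dual_abs (coord_functional T n) x\<bar> \<le> 2 * onorm T * norm x"
proof -
  have "2 * norm (coord_functional T n) * norm x \<le> 2 * onorm T * norm x"
    using norm_coord_functional_le[OF T, of n] by (simp add: mult_right_mono)
  then show ?thesis using abs_dual_abs_le[of "coord_functional T n" x] by linarith
qed

lemma apply_modulus_operator:
  "apply_bcontfun (modulus_operator T x) = (\<lambda>n. dual_abs (coord_functional T n) x)"
  unfolding modulus_operator_def
  using abs_dual_abs_coord_functional_le by (intro apply_Bcontfun_nat) simp

lemma bounded_linear_modulus_operator: "bounded_linear (modulus_operator T)"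
proof (rule bounded_linear_intro[where K="2 * onorm T"])
  show "modulus_operator T (x + y) = modulus_operator T x + modulus_operator T y" for x y
    by (rule bcontfun_eqI) (simp add: apply_modulus_operator dual_abs_add)
  show "modulus_operator T (r *\<^sub>R x) = r *\<^sub>R modulus_operator T x" for r x
    by (rule bcontfun_eqI) (simp add: apply_modulus_operator dual_abs_scaleR)
  show "norm (modulus_operator T x) \<le> norm x * (2 * onorm T)" for x
    using abs_dual_abs_coord_functional_le
    by (intro norm_bound) (simp add: apply_modulus_operator mult.commute mult.left_commute)
qed

lemma range_modulus_operator_c0:
  assumes "dual_lattice_weak_star_seq_cont TYPE('a)" "range T \<subseteq> c0"
  shows "range (modulus_operator T) \<subseteq> c0"
proof -
  have "weak_star_null (coord_functional T)"
    using assms(2) unfolding weak_star_null_def c0_def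
    by (auto simp: blinfun_apply_coord_functional[OF T])
  then show ?thesis
    using assms(1) unfolding dual_lattice_weak_star_seq_cont_def c0_def
    by (auto simp: apply_modulus_operator)
qed

lemma modulus_operator_abs_nonneg: "0 \<le> apply_bcontfun (modulus_operator T \<bar>x\<bar>) n"
  by (simp add: apply_modulus_operator dual_abs_eq_dual_abs_pos dual_abs_pos_nonneg)

lemma abs_apply_le_modulus_operator:
  assumes "\<bar>y\<bar> \<le> \<bar>x\<bar>"
  shows "\<bar>apply_bcontfun (T y) n\<bar> \<le> apply_bcontfun (modulus_operator T \<bar>x\<bar>) n"
  using abs_blinfun_apply_le_dual_abs_pos[OF assms, of "coord_functional T n"]
  by (simp add: apply_modulus_operator dual_abs_eq_dual_abs_pos blinfun_apply_coord_functional[OF T])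

end

lemma grothendieck_set_sol:
  fixes A :: "'a::banach_lattice set"
  assumes "dual_lattice_weak_star_seq_cont TYPE('a)" "grothendieck_set (abs ` A)"
  shows "grothendieck_set (sol A)"
  unfolding grothendieck_set_def
proof (intro allI impI)
  fix T :: "'a \<Rightarrow> (nat \<Rightarrow>\<^sub>C real)"
  assume T: "bounded_linear T \<and> range T \<subseteq> c0"
  then have "relatively_weakly_compact_in c0 (modulus_operator T ` abs ` A)"
    using assms bounded_linear_modulus_operator range_modulus_operator_c0
    unfolding grothendieck_set_def by blast
  then show "relatively_weakly_compact_in c0 (T ` sol A)"
  proof (rule relatively_weakly_compact_in_c0_dominated)
    show "modulus_operator T ` abs ` A \<subseteq> c0_nonneg"
      using T range_modulus_operator_c0[OF _ assms(1)]
      by (auto simp: c0_nonneg_def modulus_operator_abs_nonneg)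
    show "\<exists>b\<in>modulus_operator T ` abs ` A. \<forall>n. \<bar>apply_bcontfun c n\<bar> \<le> apply_bcontfun b n"
      if "c \<in> T ` sol A" for c
      using that T abs_apply_le_modulus_operator unfolding sol_def by blast
  qed
qed

theorem mainTheorem11:
  fixes A :: "'a::banach_lattice set"
  assumes "dual_lattice_weak_star_seq_cont TYPE('a)"
  shows "grothendieck_set (abs ` A) \<longleftrightarrow> grothendieck_set (sol A)"
proof
  assume "grothendieck_set (sol A)"
  then show "grothendieck_set (abs ` A)"
    by (rule grothendieck_set_subset) (auto simp: sol_def)
next
  assume "grothendieck_set (abs ` A)"
  with assms show "grothendieck_set (sol A)" by (rule grothendieck_set_sol)
qed

end
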